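(* Fix $\theta\in(\theta^-,\theta^+)$, $\boldsymbol{\kappa}=(\kappa_1,\dots,\kappa_4)\in\mathbb{R}^4$, $\delta\theta_{\mathbf{u}_0},\delta\theta_{\mathbf{v}_0}\in\mathbb{R}$ and $\boldsymbol{\omega}_{\mathbf{u}_0},\boldsymbol{\omega}_{\mathbf{v}_0}\in\mathbb{R}^3$. As $\ell\to0$ (all these parameters fixed), $$\mathbf{t}^{(\ell)}_{1,-,\mathbf{v}_0}-\mathbf{t}^{(\ell)}_{1,+},\quad\mathbf{t}^{(\ell)}_{3,-,\mathbf{v}_0}-\mathbf{t}^{(\ell)}_{3,+},\quad\mathbf{t}^{(\ell)}_{2,-,\mathbf{u}_0}-\mathbf{t}^{(\ell)}_{2,+},\quad\mathbf{t}^{(\ell)}_{4,-,\mathbf{u}_0}-\mathbf{t}^{(\ell)}_{4,+}$$ are all $O(\ell^2)$ if and only if (a) $\boldsymbol{\omega}_{\mathbf{u}_0}\times\mathbf{v}(\theta)+\delta\theta_{\mathbf{u}_0}\mathbf{v}'(\theta)=\boldsymbol{\omega}_{\mathbf{v}_0}\times\mathbf{u}(\theta)+\delta\theta_{\mathbf{v}_0}\mathbf{u}'(\theta)$ and $\boldsymbol{\omega}_{\mathbf{u}_0}\cdot\mathbf{v}'(\theta)=\boldsymbol{\omega}_{\mathbf{v}_0}\cdot\mathbf{u}'(\theta)$; and (b) $\boldsymbol{\kappa}=\mathbf{B}(\theta)(\boldsymbol{\omega}_{\mathbf{u}_0},\delta\theta_{\mathbf{u}_0},\boldsymbol{\omega}_{\mathbf{v}_0},\delta\theta_{\mathbf{v}_0})$,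 i.e. $\kappa_1=\frac{(\mathbf{t}_2\times\mathbf{t}_3)\cdot\boldsymbol{\omega}_{\mathbf{u}_0}+(\mathbf{t}_3\cdot\mathbf{t}_2')\delta\theta_{\mathbf{u}_0}}{V_{123}}$, $\kappa_2=\frac{(\mathbf{t}_3\times\mathbf{t}_4)\cdot\boldsymbol{\omega}_{\mathbf{v}_0}+(\mathbf{t}_3'\cdot\mathbf{t}_4)\delta\theta_{\mathbf{v}_0}}{V_{234}}$, $\kappa_3=\frac{(\mathbf{t}_4\times\mathbf{t}_1)\cdot\boldsymbol{\omega}_{\mathbf{u}_0}+(\mathbf{t}_1\cdot\mathbf{t}_4')\delta\theta_{\mathbf{u}_0}}{V_{314}}$, $\kappa_4=\frac{(\mathbf{t}_1\times\mathbf{t}_2)\cdot\boldsymbol{\omega}_{\mathbf{v}_0}+(\mathbf{t}_1'\cdot\mathbf{t}_2)\delta\theta_{\mathbf{v}_0}}{V_{421}}$ (all $\mathbf{t}_i$ evaluated at $\theta$). Moreover, condition (a) holds if and only if there are $k,\tau\in\mathbb{R}$ with $\boldsymbol{\omega}_{\mathbf{u}_0}=\tau\mathbf{u}(\theta)+k(\mathbf{u}'\cdot\mathbf{u})\mathbf{v}(\theta)+\frac{\delta\theta_{\mathbf{u}_0}\mathbf{v}'\cdot\mathbf{u}-\delta\theta_{\mathbf{v}_0}\mathbf{u}'\cdot\mathbf{u}}{\mathbf{e}_3\cdot(\mathbf{u}\times\mathbf{v})}\mathbf{e}_3$ and $\boldsymbol{\omega}_{\mathbf{v}_0}=k(\mathbf{v}'\cdot\mathbf{v})\mathbf{u}(\theta)-\tau\mathbf{v}(\theta)+\frac{\delta\theta_{\mathbf{u}_0}\mathbf{v}'\cdot\mathbf{v}-\delta\theta_{\mathbf{v}_0}\mathbf{u}'\cdot\mathbf{v}}{\mathbf{e}_3\cdot(\mathbf{u}\times\mathbf{v})}\mathbf{e}_3$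 (with $\mathbf{u},\mathbf{v},\mathbf{u}',\mathbf{v}'$ evaluated at $\theta$).
   Context: Design: $\mathbf{t}_1^r,\dots,\mathbf{t}_4^r\in\mathbb{R}^3$ with $\mathbf{t}_i^r\cdot(\mathbf{t}_j^r\times\mathbf{t}_k^r)\neq0$ for $ijk\in\{123,234,341,412\}$, non-self-intersecting, with $\mathbf{u}_0:=\mathbf{t}_1^r-\mathbf{t}_3^r$, $\mathbf{v}_0:=\mathbf{t}_2^r-\mathbf{t}_4^r$ orthogonal to $\mathbf{e}_3$, $\mathbf{e}_3\cdot(\mathbf{u}_0\times\mathbf{v}_0)>0$. $\mathbf{t}_i:(\theta^-,\theta^+)\to\mathbb{R}^3$ is the analytic mechanism parameterization of the cell (rigid folding preserving crease lengths, adjacent-crease angles and the signs of the triple products $\mathbf{t}_i\cdot(\mathbf{t}_j\times\mathbf{t}_k)$, $ijk\in\{123,234,341,412\}$, with $\mathbf{t}_i(0)=\mathbf{t}_i^r$, $\theta$ the change of dihedral angle at the $\mathbf{t}_4$ crease, normalized so that $\mathbf{u}(\theta):=\mathbf{t}_1(\theta)-\mathbf{t}_3(\theta)$ and $\mathbf{v}(\theta):=\mathbf{t}_2(\theta)-\mathbf{t}_4(\theta)$ are orthogonal to $\mathbf{e}_3$ with $\mathbf{e}_3\cdot(\mathbf{u}\times\mathbf{v})>0$); in particular $\mathbf{u}'\cdot\mathbf{u}$ and $\mathbf{v}'\cdot\mathbf{v}$ never vanish and $V_{ijk}(\theta):=\mathbf{t}_i(\theta)\cdot(\mathbf{t}_j(\theta)\times\mathbf{t}_k(\theta))\neq0$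 for distinct $i,j,k$. Primes are $d/d\theta$; $(\mathbf{a}\times)\mathbf{b}:=\mathbf{a}\times\mathbf{b}$. Bent boundary tangents (arguments $(\theta,\boldsymbol{\kappa})$ suppressed on the right): $\mathbf{t}^{(\ell)}_{1,-}=\mathbf{t}_1+\ell\kappa_4(\mathbf{t}_4\times\mathbf{t}_1)$, $\mathbf{t}^{(\ell)}_{1,+}=\mathbf{t}_1+\ell\kappa_1(\mathbf{t}_1\times\mathbf{t}_2)$, $\mathbf{t}^{(\ell)}_{2,-}=\mathbf{t}_2+\ell\kappa_2(\mathbf{t}_2\times\mathbf{t}_3)$, $\mathbf{t}^{(\ell)}_{2,+}=\mathbf{t}_2+\ell\kappa_1(\mathbf{t}_1\times\mathbf{t}_2)$, $\mathbf{t}^{(\ell)}_{3,-}=\mathbf{t}_3+\ell\kappa_3(\mathbf{t}_3\times\mathbf{t}_4)$, $\mathbf{t}^{(\ell)}_{3,+}=\mathbf{t}_3+\ell\kappa_2(\mathbf{t}_2\times\mathbf{t}_3)$, $\mathbf{t}^{(\ell)}_{4,-}=\mathbf{t}_4+\ell\kappa_3(\mathbf{t}_3\times\mathbf{t}_4)$, $\mathbf{t}^{(\ell)}_{4,+}=\mathbf{t}_4+\ell\kappa_4(\mathbf{t}_4\times\mathbf{t}_1)$, with $\mathbf{t}_i=\mathbf{t}_i(\theta)$. Neighbor tangents: $\mathbf{t}^{(\ell)}_{i,\pm,\mathbf{v}_0}:=(\mathbf{I}+\ell(\boldsymbol{\omega}_{\mathbf{v}_0}\times))\mathbf{t}^{(\ell)}_{i,\pm}(\theta+\ell\delta\theta_{\mathbf{v}_0},\boldsymbol{\kappa})$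 and $\mathbf{t}^{(\ell)}_{i,\pm,\mathbf{u}_0}:=(\mathbf{I}+\ell(\boldsymbol{\omega}_{\mathbf{u}_0}\times))\mathbf{t}^{(\ell)}_{i,\pm}(\theta+\ell\delta\theta_{\mathbf{u}_0},\boldsymbol{\kappa})$; the unsubscripted $\mathbf{t}^{(\ell)}_{i,+}$ means $\mathbf{t}^{(\ell)}_{i,+}(\theta,\boldsymbol{\kappa})$. *)

theory Defs
  imports "HOL-Analysis.Analysis" "HOL-Library.Landau_Symbols"
begin

definition real_analytic_on :: "(real \<Rightarrow> 'a::real_normed_vector) \<Rightarrow> real set \<Rightarrow> bool" where
  "real_analytic_on f S \<longleftrightarrow>
     (\<forall>x\<in>S. \<exists>r>0. \<exists>c::nat \<Rightarrow> 'a. \<forall>y. \<bar>y - x\<bar> < r \<longrightarrow> (\<lambda>n. (y - x) ^ n *\<^sub>R c n) sums f y)"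

definition e3 :: "real^3" where "e3 = axis 3 1"

definition Vtp :: "(nat \<Rightarrow> real \<Rightarrow> real^3) \<Rightarrow> nat \<Rightarrow> nat \<Rightarrow> nat \<Rightarrow> real \<Rightarrow> real" where
  "Vtp t i j k s = t i s \<bullet> cross3 (t j s) (t k s)"

text \<open>Bent boundary tangents t^(l)_{i,-} (tm i) and t^(l)_{i,+} (tp i), as functions of l and theta.\<close>
definition tm1 :: "(nat \<Rightarrow> real \<Rightarrow> real^3) \<Rightarrow> real^4 \<Rightarrow> real \<Rightarrow> real \<Rightarrow> real^3" where
  "tm1 t \<kappa> l s = t 1 s + (l * \<kappa>$4) *\<^sub>R cross3 (t 4 s) (t 1 s)"
definition tp1 :: "(nat \<Rightarrow> real \<Rightarrow> real^3) \<Rightarrow> real^4 \<Rightarrow> real \<Rightarrow> real \<Rightarrow> real^3" where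
  "tp1 t \<kappa> l s = t 1 s + (l * \<kappa>$1) *\<^sub>R cross3 (t 1 s) (t 2 s)"
definition tm2 :: "(nat \<Rightarrow> real \<Rightarrow> real^3) \<Rightarrow> real^4 \<Rightarrow> real \<Rightarrow> real \<Rightarrow> real^3" where
  "tm2 t \<kappa> l s = t 2 s + (l * \<kappa>$2) *\<^sub>R cross3 (t 2 s) (t 3 s)"
definition tp2 :: "(nat \<Rightarrow> real \<Rightarrow> real^3) \<Rightarrow> real^4 \<Rightarrow> real \<Rightarrow> real \<Rightarrow> real^3" where
  "tp2 t \<kappa> l s = t 2 s + (l * \<kappa>$1) *\<^sub>R cross3 (t 1 s) (t 2 s)"
definition tm3 :: "(nat \<Rightarrow> real \<Rightarrow> real^3) \<Rightarrow> real^4 \<Rightarrow> real \<Rightarrow> real \<Rightarrow> real^3" where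
  "tm3 t \<kappa> l s = t 3 s + (l * \<kappa>$3) *\<^sub>R cross3 (t 3 s) (t 4 s)"
definition tp3 :: "(nat \<Rightarrow> real \<Rightarrow> real^3) \<Rightarrow> real^4 \<Rightarrow> real \<Rightarrow> real \<Rightarrow> real^3" where
  "tp3 t \<kappa> l s = t 3 s + (l * \<kappa>$2) *\<^sub>R cross3 (t 2 s) (t 3 s)"
definition tm4 :: "(nat \<Rightarrow> real \<Rightarrow> real^3) \<Rightarrow> real^4 \<Rightarrow> real \<Rightarrow> real \<Rightarrow> real^3" where
  "tm4 t \<kappa> l s = t 4 s + (l * \<kappa>$3) *\<^sub>R cross3 (t 3 s) (t 4 s)"
definition tp4 :: "(nat \<Rightarrow> real \<Rightarrow> real^3) \<Rightarrow> real^4 \<Rightarrow> real \<Rightarrow> real \<Rightarrow> real^3" where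
  "tp4 t \<kappa> l s = t 4 s + (l * \<kappa>$4) *\<^sub>R cross3 (t 4 s) (t 1 s)"

definition nbr :: "real^3 \<Rightarrow> real \<Rightarrow> (real \<Rightarrow> real \<Rightarrow> real^3) \<Rightarrow> real \<Rightarrow> real \<Rightarrow> real^3" where
  "nbr \<omega> d\<theta> f l s = f l (s + l * d\<theta>) + l *\<^sub>R cross3 \<omega> (f l (s + l * d\<theta>))"

definition bigO2 :: "(real \<Rightarrow> real^3) \<Rightarrow> bool" where
  "bigO2 g \<longleftrightarrow> (\<lambda>l. norm (g l)) \<in> O[at 0](\<lambda>l. l ^ 2)"

end

theory Submission
  imports Defs "HOL-Real_Asymp.Real_Asymp"
begin

text \<open>
  Since the creases are analytic they have quadratic Taylor remainders, so each of the four
  tangent mismatches is \<open>\<ell> c\<^sub>i + O(\<ell>\<^sup>2)\<close>, and it is \<open>O(\<ell>\<^sup>2)\<close> iff its linear coefficient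
  \<open>c\<^sub>i\<close> vanishes.
  Differentiating the preserved lengths and angles gives \<open>t\<^sub>i \<bullet> t\<^sub>i' = 0\<close> and
  \<open>t\<^sub>i \<bullet> t\<^sub>j' + t\<^sub>i' \<bullet> t\<^sub>j = 0\<close> for adjacent creases.  With these, \<open>c\<^sub>i \<perp> t\<^sub>i\<close>; the component of
  \<open>c\<^sub>i\<close> along the next crease determines one curvature \<open>\<kappa>\<^sub>j\<close>, the combination
  \<open>c\<^sub>2 - c\<^sub>4 - (c\<^sub>1 - c\<^sub>3)\<close> is the vector equation of (a), and the components along
  \<open>t\<^sub>i \<times> t\<^sub>i'\<close> add up to its scalar equation.  Conversely, once the curvatures are right
  each \<open>c\<^sub>i\<close> is a multiple of the cross product of two consecutive creases, and (a) forces
  these multiples to vanish because \<open>u \<bullet> u' \<noteq> 0\<close>.  The description of the solutions of (a)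
  is linear algebra in the frame \<open>u, v, e\<^sub>3\<close>.
\<close>

section \<open>Quadratic approximation of analytic curves\<close>

definition quadratic_approx :: "(real \<Rightarrow> 'a::real_normed_vector) \<Rightarrow> 'a \<Rightarrow> real \<Rightarrow> bool" where
  "quadratic_approx f D x \<longleftrightarrow> (\<lambda>h. norm (f (x + h) - f x - h *\<^sub>R D)) \<in> O[at 0](\<lambda>h. h\<^sup>2)"

lemma power_series_quadratic_approx:
  fixes f :: "real \<Rightarrow> 'a::banach"
  assumes sums: "\<And>y. \<bar>y - x\<bar> < r \<Longrightarrow> (\<lambda>n. (y - x) ^ n *\<^sub>R c n) sums f y" and "r > 0"
  shows "quadratic_approx f (c 1) x"
proof -
  have "(\<lambda>n. (x - x) ^ n *\<^sub>R c n) sums f x" using sums[of x] \<open>r > 0\<close> by simp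
  moreover have "(\<lambda>n. (x - x) ^ n *\<^sub>R c n) = (\<lambda>n. if n = 0 then c n else 0)" by (auto simp: zero_power)
  ultimately have fx: "f x = c 0" using sums_single[of 0 c] sums_unique2 by metis
  define \<rho> where "\<rho> = r / 2"
  have \<rho>: "0 < \<rho>" "\<rho> < r" using \<open>r > 0\<close> by (auto simp: \<rho>_def)
  have "summable (\<lambda>n. \<rho> ^ n *\<^sub>R c n)" using sums[of "x + \<rho>"] \<rho> by (simp add: sums_iff)
  then have "Bseq (\<lambda>n. \<rho> ^ n *\<^sub>R c n)"
    by (intro convergent_imp_Bseq convergentI[OF summable_LIMSEQ_zero])
  then obtain M where "M > 0" and M: "\<And>n. \<rho> ^ n * norm (c n) \<le> M"
    unfolding Bseq_def using \<rho> by auto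
  \<comment> \<open>Cauchy estimate: for \<open>|h| < \<rho>/2\<close> the tail from \<open>n = 2\<close> is dominated by \<open>M (h/\<rho>)\<^sup>2\<close>
    times a geometric series of ratio \<open>1/2\<close>\<close>
  have "norm (f (x + h) - f x - h *\<^sub>R c 1) \<le> (2 * M / \<rho>\<^sup>2) * h\<^sup>2" if h: "\<bar>h\<bar> < \<rho> / 2" for h
  proof -
    have "(\<lambda>n. h ^ n *\<^sub>R c n) sums f (x + h)" using sums[of "x + h"] h \<rho> by simp
    from sums_split_initial_segment[OF this, of 2]
    have tail: "(\<lambda>n. h ^ (n + 2) *\<^sub>R c (n + 2)) sums (f (x + h) - f x - h *\<^sub>R c 1)"
      by (simp add: fx numeral_2_eq_2 lessThan_Suc algebra_simps)
    define q where "q = \<bar>h\<bar> / \<rho>"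
    have q: "0 \<le> q" "q \<le> 1/2" using h \<rho> by (auto simp: q_def field_simps)
    have bound: "norm (h ^ (n + 2) *\<^sub>R c (n + 2)) \<le> M * q\<^sup>2 * (1/2) ^ n" for n
    proof -
      have "norm (h ^ (n + 2) *\<^sub>R c (n + 2)) = q ^ (n + 2) * (\<rho> ^ (n + 2) * norm (c (n + 2)))"
        using \<rho> by (simp add: q_def power_abs power_divide abs_mult)
      also have "\<dots> \<le> q ^ (n + 2) * M" using M[of "n + 2"] q by (intro mult_left_mono) auto
      also have "\<dots> = M * q\<^sup>2 * q ^ n" by (simp add: power_add power2_eq_square)
      also have "\<dots> \<le> M * q\<^sup>2 * (1/2) ^ n" using q \<open>M > 0\<close> by (intro mult_left_mono power_mono) auto
      finally show ?thesis .
    qed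
    have "summable (\<lambda>n. M * q\<^sup>2 * (1/2::real) ^ n)" by (intro summable_mult summable_geometric) simp
    from norm_suminf_le[OF bound this] tail
    have "norm (f (x + h) - f x - h *\<^sub>R c 1) \<le> (\<Sum>n. M * q\<^sup>2 * (1/2::real) ^ n)" by (simp add: sums_iff)
    also have "\<dots> = 2 * M * q\<^sup>2" using suminf_geometric[of "1/2::real"]
      by (simp add: suminf_mult summable_geometric)
    also have "\<dots> = (2 * M / \<rho>\<^sup>2) * h\<^sup>2" by (simp add: q_def power_divide)
    finally show ?thesis .
  qed
  moreover have "eventually (\<lambda>h. \<bar>h\<bar> < \<rho> / 2) (at (0::real))"
    using \<rho> unfolding eventually_at dist_real_def by (intro exI[of _ "\<rho> / 2"]) auto
  ultimately show ?thesis unfolding quadratic_approx_def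
    by (intro bigoI[of _ "2 * M / \<rho>\<^sup>2"]) (auto elim!: eventually_mono)
qed

lemma quadratic_approx_imp_has_vector_derivative:
  assumes "quadratic_approx f D x"
  shows "(f has_vector_derivative D) (at x)"
proof -
  obtain K where K: "eventually (\<lambda>h. norm (f (x + h) - f x - h *\<^sub>R D) \<le> K * h\<^sup>2) (at 0)"
    using assms unfolding quadratic_approx_def by (auto elim!: landau_o.bigE)
  have "(\<lambda>h. norm (f (x + h) - f x - h *\<^sub>R D) / norm h) \<midarrow>0\<rightarrow> 0"
  proof (rule Lim_null_comparison)
    show "eventually (\<lambda>h. norm (norm (f (x + h) - f x - h *\<^sub>R D) / norm h) \<le> K * \<bar>h\<bar>) (at 0)"
      using K by eventually_elim (simp add: divide_le_eq power2_eq_square abs_mult_self_eq mult.assoc)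
    show "((\<lambda>h. K * \<bar>h\<bar>) \<longlongrightarrow> 0) (at (0::real))"
      by (intro tendsto_mult_right_zero tendsto_rabs_zero tendsto_ident_at)
  qed
  then show ?thesis
    unfolding has_vector_derivative_def has_derivative_at by (simp add: bounded_linear_scaleR_left)
qed

lemma real_analytic_on_quadratic_approx:
  fixes f :: "real \<Rightarrow> 'a::banach"
  assumes "real_analytic_on f S" "x \<in> S"
  shows "quadratic_approx f (vector_derivative f (at x)) x"
proof -
  obtain r c where "r > 0" "\<And>y. \<bar>y - x\<bar> < r \<Longrightarrow> (\<lambda>n. (y - x) ^ n *\<^sub>R c n) sums f y"
    using assms unfolding real_analytic_on_def by blast
  then have approx: "quadratic_approx f (c 1) x" by (intro power_series_quadratic_approx)
  then have "vector_derivative f (at x) = c 1"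
    by (intro vector_derivative_at quadratic_approx_imp_has_vector_derivative)
  with approx show ?thesis by simp
qed

section \<open>Expansion of the tangent mismatches\<close>

lemma norm_cross3_le: "norm (cross3 x y) \<le> norm x * norm y"
proof -
  have "(norm (cross3 x y))\<^sup>2 \<le> (norm x * norm y)\<^sup>2"
    using norm_cross_dot[of x y] zero_le_power2[of "x \<bullet> y"] by linarith
  then show ?thesis by (rule power2_le_imp_le) simp
qed

lemma bigo_norm_add:
  assumes "(\<lambda>x. norm (f x)) \<in> O[F](h)" "(\<lambda>x. norm (g x)) \<in> O[F](h)"
  shows "(\<lambda>x. norm (f x + g x)) \<in> O[F](h)"
  by (rule landau_o.big_trans[OF landau_o.big_mono sum_in_bigo(1)[OF assms]])
     (simp add: norm_triangle_ineq)

lemma bigo_norm_cross3: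
  assumes "(\<lambda>x. norm (f x)) \<in> O[F](h1)" "(\<lambda>x. norm (g x)) \<in> O[F](h2)"
  shows "(\<lambda>x. norm (cross3 (f x) (g x))) \<in> O[F](\<lambda>x. h1 x * h2 x)"
  by (rule landau_o.big_trans[OF landau_o.big_mono landau_o.big.mult[OF assms]])
     (simp add: norm_cross3_le)

lemma bigo_norm_scaleR:
  assumes "c \<in> O[F](h1)" "(\<lambda>x. norm (f x)) \<in> O[F](h2)"
  shows "(\<lambda>x. norm (c x *\<^sub>R f x)) \<in> O[F](\<lambda>x. h1 x * h2 x)"
  using landau_o.big.mult[OF _ assms(2), of "\<lambda>x. \<bar>c x\<bar>"] assms(1) by simp

lemma quadratic_approx_along:
  assumes "quadratic_approx f D x"
  shows "(\<lambda>l. norm (f (x + l * d) - f x - (l * d) *\<^sub>R D)) \<in> O[at 0](\<lambda>l. l\<^sup>2)"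
proof (cases "d = 0")
  case False
  have "filterlim (\<lambda>l. l * d) (at 0) (at 0)"
    using False by (intro filterlim_atI tendsto_mult_left_zero tendsto_ident_at)
                   (auto simp: eventually_at_filter)
  from landau_o.big.compose[OF assms[unfolded quadratic_approx_def] this] False show ?thesis
    by (simp add: power_mult_distrib)
qed simp

lemma quadratic_approx_increment:
  assumes "quadratic_approx f D x"
  shows "(\<lambda>l. norm (f (x + l * d) - f x)) \<in> O[at 0](\<lambda>l. l)"
proof -
  have "(\<lambda>l. norm (f (x + l * d) - f x - (l * d) *\<^sub>R D)) \<in> O[at 0](\<lambda>l. l)"
    using quadratic_approx_along[OF assms] by (rule landau_o.big_trans) real_asymp
  moreover have "(\<lambda>l. norm (l *\<^sub>R (d *\<^sub>R D))) \<in> O[at 0](\<lambda>l. l)" by simp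
  ultimately show ?thesis using bigo_norm_add by fastforce
qed

lemma quadratic_approx_bounded:
  assumes "quadratic_approx f D x"
  shows "(\<lambda>l. norm (f (x + l * d))) \<in> O[at 0](\<lambda>_. 1)"
proof -
  have "(\<lambda>l. norm (f (x + l * d) - f x)) \<in> O[at 0](\<lambda>_. 1)"
    using quadratic_approx_increment[OF assms] by (rule landau_o.big_trans) real_asymp
  moreover have "(\<lambda>l. norm (f x)) \<in> O[at 0](\<lambda>_. 1)" by simp
  ultimately show ?thesis using bigo_norm_add by fastforce
qed

lemma bent_tangent_mismatch_expansion:
  assumes X: "quadratic_approx X X' x" and P: "quadratic_approx P P' x" and Q: "quadratic_approx Q Q' x"
  shows "(\<lambda>l. norm (nbr w d (\<lambda>l s. X s + (l * a) *\<^sub>R cross3 (P s) (Q s)) l x - (X x + (l * b) *\<^sub>R N)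
            - l *\<^sub>R (d *\<^sub>R X' + a *\<^sub>R cross3 (P x) (Q x) + cross3 w (X x) - b *\<^sub>R N)))
         \<in> O[at 0](\<lambda>l. l\<^sup>2)"
proof -
  define y where "y l = x + l * d" for l
  have expand:
    "nbr w d (\<lambda>l s. X s + (l * a) *\<^sub>R cross3 (P s) (Q s)) l x - (X x + (l * b) *\<^sub>R N)
       - l *\<^sub>R (d *\<^sub>R X' + a *\<^sub>R cross3 (P x) (Q x) + cross3 w (X x) - b *\<^sub>R N)
     = (X (y l) - X x - (l * d) *\<^sub>R X')
       + (a * l) *\<^sub>R (cross3 (P (y l) - P x) (Q (y l)) + cross3 (P x) (Q (y l) - Q x))
       + l *\<^sub>R cross3 w (X (y l) - X x)
       + (a * l\<^sup>2) *\<^sub>R cross3 w (cross3 (P (y l)) (Q (y l)))" for l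
    unfolding nbr_def y_def by (simp add: cross3_simps power2_eq_square)
  have X2: "(\<lambda>l. norm (X (y l) - X x - (l * d) *\<^sub>R X')) \<in> O[at 0](\<lambda>l. l\<^sup>2)"
    unfolding y_def by (rule quadratic_approx_along[OF X])
  have "(\<lambda>l. norm (cross3 (P (y l) - P x) (Q (y l)))) \<in> O[at 0](\<lambda>l. l)"
    using bigo_norm_cross3[OF quadratic_approx_increment[OF P] quadratic_approx_bounded[OF Q]]
    unfolding y_def by simp
  moreover have "(\<lambda>l. norm (cross3 (P x) (Q (y l) - Q x))) \<in> O[at 0](\<lambda>l. l)"
    using bigo_norm_cross3[OF _ quadratic_approx_increment[OF Q], of "\<lambda>_. P x" "\<lambda>_. 1"]
    unfolding y_def by simp
  ultimately have "(\<lambda>l. norm (cross3 (P (y l) - P x) (Q (y l)) + cross3 (P x) (Q (y l) - Q x)))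
      \<in> O[at 0](\<lambda>l. l)"
    by (rule bigo_norm_add)
  then have PQ2: "(\<lambda>l. norm ((a * l) *\<^sub>R (cross3 (P (y l) - P x) (Q (y l)) + cross3 (P x) (Q (y l) - Q x))))
      \<in> O[at 0](\<lambda>l. l\<^sup>2)"
    using bigo_norm_scaleR[of "\<lambda>l. a * l" _ "\<lambda>l. l"] by (simp add: power2_eq_square)
  have "(\<lambda>l. norm (cross3 w (X (y l) - X x))) \<in> O[at 0](\<lambda>l. l)"
    using bigo_norm_cross3[OF _ quadratic_approx_increment[OF X], of "\<lambda>_. w" "\<lambda>_. 1"] unfolding y_def by simp
  then have wX2: "(\<lambda>l. norm (l *\<^sub>R cross3 w (X (y l) - X x))) \<in> O[at 0](\<lambda>l. l\<^sup>2)"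
    using bigo_norm_scaleR[of "\<lambda>l. l" _ "\<lambda>l. l"] by (simp add: power2_eq_square)
  have wPQ: "(\<lambda>l. norm (cross3 w (cross3 (P (y l)) (Q (y l))))) \<in> O[at 0](\<lambda>_. 1)"
    using bigo_norm_cross3[OF _ bigo_norm_cross3[OF quadratic_approx_bounded[OF P] quadratic_approx_bounded[OF Q]],
        of "\<lambda>_. w" "\<lambda>_. 1"] unfolding y_def by simp
  have wPQ2: "(\<lambda>l. norm ((a * l\<^sup>2) *\<^sub>R cross3 w (cross3 (P (y l)) (Q (y l))))) \<in> O[at 0](\<lambda>l. l\<^sup>2)"
    using bigo_norm_scaleR[OF _ wPQ, of "\<lambda>l. a * l\<^sup>2" "\<lambda>l. l\<^sup>2"] by simp
  show ?thesis
    unfolding expand by (intro bigo_norm_add X2 PQ2 wX2 wPQ2)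
qed

lemma bigO2_iff_linear_coeff_eq_0:
  assumes "(\<lambda>l. norm (g l - l *\<^sub>R c)) \<in> O[at 0](\<lambda>l. l\<^sup>2)"
  shows "bigO2 g \<longleftrightarrow> c = 0"
proof
  assume "bigO2 g"
  moreover have "(\<lambda>l. norm (- (g l - l *\<^sub>R c))) \<in> O[at 0](\<lambda>l. l\<^sup>2)"
    using assms by (simp only: norm_minus_cancel)
  ultimately have "(\<lambda>l. norm (g l + - (g l - l *\<^sub>R c))) \<in> O[at 0](\<lambda>l. l\<^sup>2)"
    unfolding bigO2_def by (rule bigo_norm_add)
  then have "(\<lambda>l. norm c * l) \<in> O[at 0](\<lambda>l. l\<^sup>2)" by simp
  show "c = 0"
  proof (rule ccontr)
    assume "c \<noteq> 0"
    with \<open>(\<lambda>l. norm c * l) \<in> O[at 0](\<lambda>l. l\<^sup>2)\<close> have "(\<lambda>l::real. l) \<in> O[at 0](\<lambda>l. l\<^sup>2)" by simp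
    moreover have "(\<lambda>l. l\<^sup>2) \<in> o[at (0::real)](\<lambda>l. l)" by real_asymp
    ultimately have "eventually (\<lambda>l. l\<^sup>2 = 0) (at (0::real))"
      by (intro landau_o.small_big_asymmetric)
    moreover have "eventually (\<lambda>l. l \<noteq> 0) (at (0::real))" by (simp add: eventually_at_filter)
    ultimately have "eventually (\<lambda>_. False) (at (0::real))" by eventually_elim simp
    then show False by simp
  qed
next
  assume "c = 0"
  with assms show "bigO2 g" unfolding bigO2_def by simp
qed

lemma bigO2_bent_tangent_mismatch_iff:
  assumes "quadratic_approx X X' x" "quadratic_approx P P' x" "quadratic_approx Q Q' x"
  shows "bigO2 (\<lambda>l. nbr w d (\<lambda>l s. X s + (l * a) *\<^sub>R cross3 (P s) (Q s)) l x - (X x + (l * b) *\<^sub>R N))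
    \<longleftrightarrow> d *\<^sub>R X' + a *\<^sub>R cross3 (P x) (Q x) + cross3 w (X x) - b *\<^sub>R N = 0"
  by (rule bigO2_iff_linear_coeff_eq_0[OF bent_tangent_mismatch_expansion[OF assms]])

lemma inner_cross3_left: "cross3 a b \<bullet> c = a \<bullet> cross3 b c"
  by (simp add: cross3_simps)

lemma inner_cross3_rotate: "a \<bullet> cross3 b c = b \<bullet> cross3 c a"
  by (simp add: cross3_simps)

lemma inner_cross3_cross3: "cross3 a b \<bullet> cross3 c d = (a \<bullet> c) * (b \<bullet> d) - (a \<bullet> d) * (b \<bullet> c)"
  by (simp add: cross3_simps forall_3)

lemma cross3_cramer:
  "(a \<bullet> cross3 b c) *\<^sub>R x = (x \<bullet> cross3 b c) *\<^sub>R a + (x \<bullet> cross3 c a) *\<^sub>R b + (x \<bullet> cross3 a b) *\<^sub>R c"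
  by (simp add: cross3_simps forall_3)

lemma cross3_cramer_dual:
  "(a \<bullet> cross3 b c) *\<^sub>R x = (x \<bullet> a) *\<^sub>R cross3 b c + (x \<bullet> b) *\<^sub>R cross3 c a + (x \<bullet> c) *\<^sub>R cross3 a b"
  by (simp add: cross3_simps forall_3)

lemma cross3_four_term_identity:
  "(a2 \<bullet> cross3 a3 a4) *\<^sub>R a1 - (a3 \<bullet> cross3 a4 a1) *\<^sub>R a2
     + (a4 \<bullet> cross3 a1 a2) *\<^sub>R a3 - (a1 \<bullet> cross3 a2 a3) *\<^sub>R a4 = 0"
  by (simp add: cross3_simps forall_3)

lemma orthogonal_eq_scaleR_cross3:
  assumes "c \<bullet> a = 0" "c \<bullet> b = 0" "d \<bullet> cross3 a b \<noteq> 0"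
  shows "c = ((c \<bullet> d) / (d \<bullet> cross3 a b)) *\<^sub>R cross3 a b"
proof -
  have "(d \<bullet> cross3 a b) *\<^sub>R c = (c \<bullet> d) *\<^sub>R cross3 a b"
    using cross3_cramer_dual[of a b d c] assms(1,2) by (simp add: inner_cross3_rotate[of d a b, symmetric])
  then have "c = inverse (d \<bullet> cross3 a b) *\<^sub>R ((c \<bullet> d) *\<^sub>R cross3 a b)"
    using assms(3) by (metis scaleR_scaleR left_inverse scaleR_one)
  then show ?thesis by (simp add: divide_inverse_commute)
qed

lemma eq_0_if_inner_basis_eq_0:
  assumes "a \<bullet> cross3 b c \<noteq> 0" "a \<bullet> x = 0" "b \<bullet> x = 0" "c \<bullet> x = 0"
  shows "x = 0"
  using cross3_cramer_dual[of a b c x] assms by (simp add: inner_commute)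

lemma cross3_basis_decomposition:
  assumes "a \<bullet> cross3 b c \<noteq> 0"
  obtains \<alpha> \<beta> \<gamma> where "x = \<alpha> *\<^sub>R a + \<beta> *\<^sub>R b + \<gamma> *\<^sub>R c"
proof
  show "x = ((x \<bullet> cross3 b c) / (a \<bullet> cross3 b c)) *\<^sub>R a + ((x \<bullet> cross3 c a) / (a \<bullet> cross3 b c)) *\<^sub>R b
      + ((x \<bullet> cross3 a b) / (a \<bullet> cross3 b c)) *\<^sub>R c"
    using arg_cong[OF cross3_cramer[of a b c x], of "\<lambda>y. inverse (a \<bullet> cross3 b c) *\<^sub>R y"] assms
    by (simp add: scaleR_add_right divide_inverse_commute)
qed

section \<open>Linear coefficients of the mismatches\<close>

text \<open>All four linear coefficients have this shape, \<open>p\<close> and \<open>q\<close> being the creases adjacent to \<open>a\<close>.\<close>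

lemma bending_coefficient_inner:
  fixes a b c p q w :: "real^3" and d kp kq :: real
  assumes c_def: "c = d *\<^sub>R b + cross3 w a + kp *\<^sub>R cross3 p a + kq *\<^sub>R cross3 a q"
    and "a \<bullet> b = 0"
  shows "c \<bullet> a = 0"
    and "c \<bullet> q = d * (b \<bullet> q) + w \<bullet> cross3 a q + kp * (p \<bullet> cross3 a q)"
    and "c \<bullet> cross3 a b = (a \<bullet> a) * (kq * (q \<bullet> b) - kp * (p \<bullet> b) - w \<bullet> b)"
proof -
  have ba: "b \<bullet> a = 0" using assms(2) by (simp add: inner_commute)
  show "c \<bullet> a = 0" "c \<bullet> q = d * (b \<bullet> q) + w \<bullet> cross3 a q + kp * (p \<bullet> cross3 a q)"
    unfolding c_def using ba
    by (simp_all add: inner_add_left inner_scaleR_left dot_cross_self inner_cross3_left)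
  show "c \<bullet> cross3 a b = (a \<bullet> a) * (kq * (q \<bullet> b) - kp * (p \<bullet> b) - w \<bullet> b)"
    unfolding c_def using assms(2)
    by (simp add: inner_add_left inner_scaleR_left dot_cross_self inner_cross3_cross3 inner_commute algebra_simps)
qed

text \<open>\<open>a\<^sub>i\<close> stands for the crease \<open>t\<^sub>i(\<theta>)\<close> and \<open>b\<^sub>i\<close> for its velocity \<open>t\<^sub>i'(\<theta>)\<close>.\<close>

locale rigid_vertex_jet =
  fixes a1 a2 a3 a4 b1 b2 b3 b4 :: "real^3"
  assumes o1: "a1 \<bullet> b1 = 0" and o2: "a2 \<bullet> b2 = 0" and o3: "a3 \<bullet> b3 = 0" and o4: "a4 \<bullet> b4 = 0"
    and adj1: "a2 \<bullet> b1 + a1 \<bullet> b2 = 0" and adj2: "a3 \<bullet> b2 + a2 \<bullet> b3 = 0"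
    and adj3: "a4 \<bullet> b3 + a3 \<bullet> b4 = 0" and adj4: "a1 \<bullet> b4 + a4 \<bullet> b1 = 0"
    and V1: "a1 \<bullet> cross3 a2 a3 \<noteq> 0" and V2: "a2 \<bullet> cross3 a3 a4 \<noteq> 0"
    and V3: "a3 \<bullet> cross3 a4 a1 \<noteq> 0" and V4: "a4 \<bullet> cross3 a1 a2 \<noteq> 0"
    and diagonal_regular: "(a1 - a3) \<bullet> (b1 - b3) \<noteq> 0"
begin

lemma triple_product_inner_identity:
  "(a3 \<bullet> cross3 a4 a1) * (a2 \<bullet> cross3 a3 a4) * (a2 \<bullet> b1) - (a3 \<bullet> cross3 a4 a1) * (a4 \<bullet> cross3 a1 a2) * (a3 \<bullet> b2)
    + (a4 \<bullet> cross3 a1 a2) * (a1 \<bullet> cross3 a2 a3) * (a4 \<bullet> b3) - (a1 \<bullet> cross3 a2 a3) * (a2 \<bullet> cross3 a3 a4) * (a1 \<bullet> b4)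
   = - (a2 \<bullet> cross3 a3 a4) * (a4 \<bullet> cross3 a1 a2) * ((a1 - a3) \<bullet> (b1 - b3))"
proof -
  define V1 V2 V3 V4 where "V1 = a1 \<bullet> cross3 a2 a3" and "V2 = a2 \<bullet> cross3 a3 a4"
    and "V3 = a3 \<bullet> cross3 a4 a1" and "V4 = a4 \<bullet> cross3 a1 a2"
  have four: "V2 * (a1 \<bullet> b) - V3 * (a2 \<bullet> b) + V4 * (a3 \<bullet> b) - V1 * (a4 \<bullet> b) = 0" for b
    using arg_cong[OF cross3_four_term_identity[of a2 a3 a4 a1], of "\<lambda>x. x \<bullet> b"]
    unfolding V1_def V2_def V3_def V4_def by (simp add: inner_diff_left inner_add_left)
  define p11 p13 p14 p21 p31 p32 p23 p41 p43 p33 where "p11 = a1 \<bullet> b1" and "p13 = a1 \<bullet> b3"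
    and "p14 = a1 \<bullet> b4" and "p21 = a2 \<bullet> b1" and "p31 = a3 \<bullet> b1" and "p32 = a3 \<bullet> b2"
    and "p23 = a2 \<bullet> b3" and "p41 = a4 \<bullet> b1" and "p43 = a4 \<bullet> b3" and "p33 = a3 \<bullet> b3"
  have F1: "V2 * p11 - V3 * p21 + V4 * p31 - V1 * p41 = 0" and F3: "V2 * p13 - V3 * p23 + V4 * p33 - V1 * p43 = 0"
    using four[of b1] four[of b3] unfolding p11_def p13_def p21_def p31_def p23_def p41_def p43_def p33_def
    by simp_all
  \<comment> \<open>the difference of the two sides is a combination of the four-term identity and the jet relations\<close>
  have "V3 * V2 * p21 - V3 * V4 * p32 + V4 * V1 * p43 - V1 * V2 * p14 + V2 * V4 * (p11 - p13 - p31 + p33)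
      = (V2 * V4 + V2 * V2) * p11 + (V4 * V4 + V2 * V4) * p33 - V3 * V4 * (p32 + p23) - V1 * V2 * (p14 + p41)
        - V2 * (V2 * p11 - V3 * p21 + V4 * p31 - V1 * p41) - V4 * (V2 * p13 - V3 * p23 + V4 * p33 - V1 * p43)"
    by (simp add: algebra_simps)
  also have "\<dots> = 0"
    using F1 F3 o1 o3 adj2 adj4 unfolding p11_def p33_def p32_def p23_def p14_def p41_def by simp
  finally show ?thesis
    unfolding V1_def[symmetric] V2_def[symmetric] V3_def[symmetric] V4_def[symmetric]
      p11_def[symmetric] p13_def[symmetric] p14_def[symmetric] p21_def[symmetric] p31_def[symmetric]
      p32_def[symmetric] p43_def[symmetric] p33_def[symmetric] inner_diff_left inner_diff_right
    by (simp add: algebra_simps)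
qed

lemma cyclic_cross3_combination_eq_0:
  assumes vec: "z2 *\<^sub>R cross3 a2 a3 - z4 *\<^sub>R cross3 a4 a1 = z1 *\<^sub>R cross3 a1 a2 - z3 *\<^sub>R cross3 a3 a4"
    and scal: "z1 * (a2 \<bullet> b1) - z2 * (a3 \<bullet> b2) - z3 * (a4 \<bullet> b3) + z4 * (a1 \<bullet> b4) = 0"
  shows "z1 = 0 \<and> z2 = 0 \<and> z3 = 0 \<and> z4 = 0"
proof -
  define V1 V2 V3 V4 where "V1 = a1 \<bullet> cross3 a2 a3" and "V2 = a2 \<bullet> cross3 a3 a4"
    and "V3 = a3 \<bullet> cross3 a4 a1" and "V4 = a4 \<bullet> cross3 a1 a2"
  have "a2 \<bullet> (z2 *\<^sub>R cross3 a2 a3 - z4 *\<^sub>R cross3 a4 a1) = a2 \<bullet> (z1 *\<^sub>R cross3 a1 a2 - z3 *\<^sub>R cross3 a3 a4)"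
       "a3 \<bullet> (z2 *\<^sub>R cross3 a2 a3 - z4 *\<^sub>R cross3 a4 a1) = a3 \<bullet> (z1 *\<^sub>R cross3 a1 a2 - z3 *\<^sub>R cross3 a3 a4)"
       "a4 \<bullet> (z2 *\<^sub>R cross3 a2 a3 - z4 *\<^sub>R cross3 a4 a1) = a4 \<bullet> (z1 *\<^sub>R cross3 a1 a2 - z3 *\<^sub>R cross3 a3 a4)"
    using vec by simp_all
  moreover have "a2 \<bullet> cross3 a4 a1 = V4" "a3 \<bullet> cross3 a1 a2 = V1" "a4 \<bullet> cross3 a2 a3 = V2"
    unfolding V1_def V2_def V4_def by (metis inner_cross3_rotate)+
  ultimately have rel: "V2 * z3 = V4 * z4" "V3 * z4 = - V1 * z1" "V2 * z2 = V4 * z1"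
    by (simp_all add: inner_diff_right dot_cross_self V1_def V2_def V3_def V4_def algebra_simps)
  have "0 = V2 * V3 * (z1 * (a2 \<bullet> b1) - z2 * (a3 \<bullet> b2) - z3 * (a4 \<bullet> b3) + z4 * (a1 \<bullet> b4))"
    using scal by simp
  also have "\<dots> = V2 * V3 * z1 * (a2 \<bullet> b1) - V3 * (a3 \<bullet> b2) * (V2 * z2) - V3 * (a4 \<bullet> b3) * (V2 * z3)
      + V2 * (a1 \<bullet> b4) * (V3 * z4)"
    by (simp add: algebra_simps)
  also have "\<dots> = V2 * V3 * z1 * (a2 \<bullet> b1) - V3 * (a3 \<bullet> b2) * (V4 * z1) - V4 * (a4 \<bullet> b3) * (V3 * z4)
      + V2 * (a1 \<bullet> b4) * (V3 * z4)"
    unfolding rel(1,3) by (simp add: algebra_simps)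
  also have "\<dots> = z1 * (V3 * V2 * (a2 \<bullet> b1) - V3 * V4 * (a3 \<bullet> b2) + V4 * V1 * (a4 \<bullet> b3) - V1 * V2 * (a1 \<bullet> b4))"
    unfolding rel(2) by (simp add: algebra_simps)
  also have "\<dots> = - z1 * V2 * V4 * ((a1 - a3) \<bullet> (b1 - b3))"
    using triple_product_inner_identity unfolding V1_def V2_def V3_def V4_def by simp
  finally have "z1 = 0" using diagonal_regular V2 V4 unfolding V2_def V4_def by simp
  with rel V1 V2 V3 V4 show ?thesis unfolding V1_def V2_def V3_def V4_def by auto
qed

lemma eq_0_if_compatible_projections:
  assumes orth: "c1 \<bullet> a1 = 0" "c1 \<bullet> a2 = 0" "c2 \<bullet> a2 = 0" "c2 \<bullet> a3 = 0"
      "c3 \<bullet> a3 = 0" "c3 \<bullet> a4 = 0" "c4 \<bullet> a4 = 0" "c4 \<bullet> a1 = 0"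
    and vec: "c2 - c4 = c1 - c3"
    and scal: "c1 \<bullet> cross3 a1 b1 / (a1 \<bullet> a1) - c2 \<bullet> cross3 a2 b2 / (a2 \<bullet> a2)
      - c3 \<bullet> cross3 a3 b3 / (a3 \<bullet> a3) + c4 \<bullet> cross3 a4 b4 / (a4 \<bullet> a4) = 0"
  shows "c1 = 0 \<and> c2 = 0 \<and> c3 = 0 \<and> c4 = 0"
proof -
  obtain z1 z2 z3 z4 where z: "c1 = z1 *\<^sub>R cross3 a1 a2" "c2 = z2 *\<^sub>R cross3 a2 a3"
      "c3 = z3 *\<^sub>R cross3 a3 a4" "c4 = z4 *\<^sub>R cross3 a4 a1"
    using orthogonal_eq_scaleR_cross3[OF orth(1,2), of a4] orthogonal_eq_scaleR_cross3[OF orth(3,4), of a1]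
      orthogonal_eq_scaleR_cross3[OF orth(5,6), of a2] orthogonal_eq_scaleR_cross3[OF orth(7,8), of a3]
      V1 V2 V3 V4 by blast
  have "a1 \<noteq> 0" "a2 \<noteq> 0" "a3 \<noteq> 0" "a4 \<noteq> 0" using V1 V2 by auto
  then have "z1 * (a2 \<bullet> b1) - z2 * (a3 \<bullet> b2) - z3 * (a4 \<bullet> b3) + z4 * (a1 \<bullet> b4) = 0"
    using scal o1 o2 o3 o4 unfolding z by (simp add: inner_cross3_cross3 inner_commute)
  with vec have "z1 = 0 \<and> z2 = 0 \<and> z3 = 0 \<and> z4 = 0" unfolding z
    by (intro cyclic_cross3_combination_eq_0) (auto simp: algebra_simps)
  then show ?thesis using z by simp
qed

lemma bending_coefficients_eq_0_iff:
  fixes wu wv :: "real^3" and du dv k1 k2 k3 k4 :: real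
  defines "c1 \<equiv> dv *\<^sub>R b1 + k4 *\<^sub>R cross3 a4 a1 + cross3 wv a1 - k1 *\<^sub>R cross3 a1 a2"
    and "c3 \<equiv> dv *\<^sub>R b3 + k3 *\<^sub>R cross3 a3 a4 + cross3 wv a3 - k2 *\<^sub>R cross3 a2 a3"
    and "c2 \<equiv> du *\<^sub>R b2 + k2 *\<^sub>R cross3 a2 a3 + cross3 wu a2 - k1 *\<^sub>R cross3 a1 a2"
    and "c4 \<equiv> du *\<^sub>R b4 + k3 *\<^sub>R cross3 a3 a4 + cross3 wu a4 - k4 *\<^sub>R cross3 a4 a1"
  shows "(c1 = 0 \<and> c3 = 0 \<and> c2 = 0 \<and> c4 = 0) \<longleftrightarrow>
    ((cross3 wu (a2 - a4) + du *\<^sub>R (b2 - b4) = cross3 wv (a1 - a3) + dv *\<^sub>R (b1 - b3)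
      \<and> wu \<bullet> (b2 - b4) = wv \<bullet> (b1 - b3))
    \<and> (k1 = (cross3 a2 a3 \<bullet> wu + (a3 \<bullet> b2) * du) / (a1 \<bullet> cross3 a2 a3)
      \<and> k2 = (cross3 a3 a4 \<bullet> wv + (b3 \<bullet> a4) * dv) / (a2 \<bullet> cross3 a3 a4)
      \<and> k3 = (cross3 a4 a1 \<bullet> wu + (a1 \<bullet> b4) * du) / (a3 \<bullet> cross3 a1 a4)
      \<and> k4 = (cross3 a1 a2 \<bullet> wv + (b1 \<bullet> a2) * dv) / (a4 \<bullet> cross3 a2 a1)))"
    (is "?coeffs \<longleftrightarrow> (?compat1 \<and> ?compat2) \<and> ?kappa")
proof -
  have c: "c1 = dv *\<^sub>R b1 + cross3 wv a1 + k4 *\<^sub>R cross3 a4 a1 + (- k1) *\<^sub>R cross3 a1 a2"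
    "c2 = du *\<^sub>R b2 + cross3 wu a2 + (- k1) *\<^sub>R cross3 a1 a2 + k2 *\<^sub>R cross3 a2 a3"
    "c3 = dv *\<^sub>R b3 + cross3 wv a3 + (- k2) *\<^sub>R cross3 a2 a3 + k3 *\<^sub>R cross3 a3 a4"
    "c4 = du *\<^sub>R b4 + cross3 wu a4 + k3 *\<^sub>R cross3 a3 a4 + (- k4) *\<^sub>R cross3 a4 a1"
    unfolding c1_def c2_def c3_def c4_def by simp_all
  note G1 = bending_coefficient_inner[OF c(1) o1] and G2 = bending_coefficient_inner[OF c(2) o2]
    and G3 = bending_coefficient_inner[OF c(3) o3] and G4 = bending_coefficient_inner[OF c(4) o4]
  have n: "a1 \<bullet> a1 \<noteq> 0" "a2 \<bullet> a2 \<noteq> 0" "a3 \<bullet> a3 \<noteq> 0" "a4 \<bullet> a4 \<noteq> 0"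
    using V1 V2 by auto
  have kappa_iff: "?kappa \<longleftrightarrow> c2 \<bullet> a3 = 0 \<and> c3 \<bullet> a4 = 0 \<and> c4 \<bullet> a1 = 0 \<and> c1 \<bullet> a2 = 0"
    using V1 V2 V3 V4 unfolding G1(2) G2(2) G3(2) G4(2)
    by (auto simp: cross_skew[of a1 a4] cross_skew[of a2 a1] field_simps inner_commute)
  have compat1_iff: "?compat1 \<longleftrightarrow> c2 - c4 = c1 - c3"
    unfolding c1_def c2_def c3_def c4_def by (auto simp: Cross3.right_diff_distrib algebra_simps)
  have "c1 \<bullet> cross3 a1 b1 / (a1 \<bullet> a1) - c2 \<bullet> cross3 a2 b2 / (a2 \<bullet> a2)
      - c3 \<bullet> cross3 a3 b3 / (a3 \<bullet> a3) + c4 \<bullet> cross3 a4 b4 / (a4 \<bullet> a4)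
    = wu \<bullet> (b2 - b4) - wv \<bullet> (b1 - b3) - k1 * (a2 \<bullet> b1 + a1 \<bullet> b2) - k2 * (a3 \<bullet> b2 + a2 \<bullet> b3)
      - k3 * (a4 \<bullet> b3 + a3 \<bullet> b4) - k4 * (a1 \<bullet> b4 + a4 \<bullet> b1)"
    using n unfolding G1(3) G2(3) G3(3) G4(3) by (simp add: inner_diff_right field_simps)
  then have compat2_iff: "?compat2 \<longleftrightarrow> c1 \<bullet> cross3 a1 b1 / (a1 \<bullet> a1) - c2 \<bullet> cross3 a2 b2 / (a2 \<bullet> a2)
      - c3 \<bullet> cross3 a3 b3 / (a3 \<bullet> a3) + c4 \<bullet> cross3 a4 b4 / (a4 \<bullet> a4) = 0"
    using adj1 adj2 adj3 adj4 by simp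
  show ?thesis
    using compat1_iff compat2_iff kappa_iff eq_0_if_compatible_projections[OF G1(1) _ G2(1) _ G3(1) _ G4(1)]
    by auto
qed

end

section \<open>Compatible rotations in the plane of the diagonals\<close>

lemma inner_cross3_frame:
  "n \<bullet> cross3 (a *\<^sub>R u + b *\<^sub>R v + c *\<^sub>R n) v = a * (n \<bullet> cross3 u v)"
  "u \<bullet> cross3 (a *\<^sub>R u + b *\<^sub>R v + c *\<^sub>R n) v = - c * (n \<bullet> cross3 u v)"
  "n \<bullet> cross3 (a *\<^sub>R u + b *\<^sub>R v + c *\<^sub>R n) u = - b * (n \<bullet> cross3 u v)"
  "v \<bullet> cross3 (a *\<^sub>R u + b *\<^sub>R v + c *\<^sub>R n) u = c * (n \<bullet> cross3 u v)"
  by (simp_all add: cross3_simps forall_3)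

context
  fixes u v p q :: "real^3"
  assumes planar: "e3 \<bullet> u = 0" "e3 \<bullet> v = 0" "e3 \<bullet> p = 0" "e3 \<bullet> q = 0"
    and frame: "e3 \<bullet> cross3 u v \<noteq> 0"
begin

lemma inner_planar_frame: "(a *\<^sub>R u + b *\<^sub>R v + c *\<^sub>R e3) \<bullet> z = a * (u \<bullet> z) + b * (v \<bullet> z) + c * (e3 \<bullet> z)"
  by (simp add: inner_add_left)

lemma planar_frame_basis: "u \<bullet> cross3 v e3 \<noteq> 0"
  using frame by (metis inner_cross3_rotate)

lemma planar_compatibility_imp_parametrization:
  assumes pu: "p \<bullet> u \<noteq> 0" and uvp: "u \<bullet> q + p \<bullet> v = 0"
    and A: "cross3 x v + du *\<^sub>R q = cross3 y u + dv *\<^sub>R p" "x \<bullet> q = y \<bullet> p"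
  shows "\<exists>k \<tau>. x = \<tau> *\<^sub>R u + (k * (p \<bullet> u)) *\<^sub>R v + ((du * (q \<bullet> u) - dv * (p \<bullet> u)) / (e3 \<bullet> cross3 u v)) *\<^sub>R e3
    \<and> y = (k * (q \<bullet> v)) *\<^sub>R u - \<tau> *\<^sub>R v + ((du * (q \<bullet> v) - dv * (p \<bullet> v)) / (e3 \<bullet> cross3 u v)) *\<^sub>R e3"
proof -
  define \<Lambda> where "\<Lambda> = e3 \<bullet> cross3 u v"
  obtain \<tau> \<beta> \<gamma> where x: "x = \<tau> *\<^sub>R u + \<beta> *\<^sub>R v + \<gamma> *\<^sub>R e3"
    using cross3_basis_decomposition[OF planar_frame_basis] by blast
  obtain \<alpha>' \<beta>' \<gamma>' where y: "y = \<alpha>' *\<^sub>R u + \<beta>' *\<^sub>R v + \<gamma>' *\<^sub>R e3"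
    using cross3_basis_decomposition[OF planar_frame_basis] by blast
  have "e3 \<bullet> (cross3 x v + du *\<^sub>R q) = e3 \<bullet> (cross3 y u + dv *\<^sub>R p)"
    "u \<bullet> (cross3 x v + du *\<^sub>R q) = u \<bullet> (cross3 y u + dv *\<^sub>R p)"
    "v \<bullet> (cross3 x v + du *\<^sub>R q) = v \<bullet> (cross3 y u + dv *\<^sub>R p)"
    using A by simp_all
  then have e3_part: "(\<tau> + \<beta>') * \<Lambda> = 0" and u_part: "- \<gamma> * \<Lambda> + du * (u \<bullet> q) = dv * (u \<bullet> p)"
    and v_part: "du * (v \<bullet> q) = \<gamma>' * \<Lambda> + dv * (v \<bullet> p)"
    unfolding x y inner_add_right inner_cross3_frame \<Lambda>_def[symmetric] by (simp_all add: planar dot_cross_self algebra_simps)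
  have "\<Lambda> \<noteq> 0" using frame by (simp add: \<Lambda>_def)
  with e3_part have \<beta>': "\<beta>' = - \<tau>" by simp
  from \<open>\<Lambda> \<noteq> 0\<close> u_part v_part have \<gamma>: "\<gamma> = (du * (q \<bullet> u) - dv * (p \<bullet> u)) / \<Lambda>"
    and \<gamma>': "\<gamma>' = (du * (q \<bullet> v) - dv * (p \<bullet> v)) / \<Lambda>"
    by (auto simp: field_simps inner_commute)
  have "\<tau> * (u \<bullet> q) + \<beta> * (v \<bullet> q) = \<alpha>' * (u \<bullet> p) + \<beta>' * (v \<bullet> p)"
    using A(2) unfolding x y by (simp add: inner_planar_frame planar)
  with \<beta>' have "\<alpha>' * (p \<bullet> u) = \<beta> * (q \<bullet> v) + \<tau> * (u \<bullet> q + p \<bullet> v)"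
    by (simp add: inner_commute algebra_simps)
  with uvp have "\<alpha>' * (p \<bullet> u) = \<beta> * (q \<bullet> v)" by simp
  then have "\<alpha>' = \<beta> / (p \<bullet> u) * (q \<bullet> v)" and "\<beta> = \<beta> / (p \<bullet> u) * (p \<bullet> u)"
    using pu by (simp_all add: field_simps)
  then show ?thesis
    using x y \<beta>' \<gamma> \<gamma>' unfolding \<Lambda>_def by (intro exI[of _ "\<beta> / (p \<bullet> u)"] exI[of _ \<tau>]) simp
qed

lemma planar_parametrization_imp_compatibility:
  assumes uvp: "u \<bullet> q + p \<bullet> v = 0"
    and x: "x = \<tau> *\<^sub>R u + (k * (p \<bullet> u)) *\<^sub>R v + ((du * (q \<bullet> u) - dv * (p \<bullet> u)) / (e3 \<bullet> cross3 u v)) *\<^sub>R e3"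
    and y: "y = (k * (q \<bullet> v)) *\<^sub>R u + (- \<tau>) *\<^sub>R v + ((du * (q \<bullet> v) - dv * (p \<bullet> v)) / (e3 \<bullet> cross3 u v)) *\<^sub>R e3"
  shows "cross3 x v + du *\<^sub>R q = cross3 y u + dv *\<^sub>R p" "x \<bullet> q = y \<bullet> p"
proof -
  have "(cross3 x v + du *\<^sub>R q) - (cross3 y u + dv *\<^sub>R p) = 0"
  proof (rule eq_0_if_inner_basis_eq_0[OF planar_frame_basis])
    show "u \<bullet> (cross3 x v + du *\<^sub>R q - (cross3 y u + dv *\<^sub>R p)) = 0"
      "v \<bullet> (cross3 x v + du *\<^sub>R q - (cross3 y u + dv *\<^sub>R p)) = 0"
      "e3 \<bullet> (cross3 x v + du *\<^sub>R q - (cross3 y u + dv *\<^sub>R p)) = 0"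
      using frame unfolding x y inner_diff_right inner_add_right inner_cross3_frame
      by (simp_all add: planar dot_cross_self inner_commute field_simps)
  qed
  then show "cross3 x v + du *\<^sub>R q = cross3 y u + dv *\<^sub>R p" by simp
  have "x \<bullet> q - y \<bullet> p = \<tau> * (u \<bullet> q + p \<bullet> v)"
    unfolding x y by (simp add: inner_planar_frame planar inner_commute algebra_simps)
  with uvp show "x \<bullet> q = y \<bullet> p" by simp
qed

lemma planar_compatibility_iff:
  assumes "p \<bullet> u \<noteq> 0" and "u \<bullet> q + p \<bullet> v = 0"
  shows "(cross3 x v + du *\<^sub>R q = cross3 y u + dv *\<^sub>R p \<and> x \<bullet> q = y \<bullet> p) \<longleftrightarrow>
    (\<exists>k \<tau>. x = \<tau> *\<^sub>R u + (k * (p \<bullet> u)) *\<^sub>R v + ((du * (q \<bullet> u) - dv * (p \<bullet> u)) / (e3 \<bullet> cross3 u v)) *\<^sub>R e3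
        \<and> y = (k * (q \<bullet> v)) *\<^sub>R u - \<tau> *\<^sub>R v + ((du * (q \<bullet> v) - dv * (p \<bullet> v)) / (e3 \<bullet> cross3 u v)) *\<^sub>R e3)"
  using planar_compatibility_imp_parametrization[OF assms] planar_parametrization_imp_compatibility[OF assms(2)]
  by auto

end

section \<open>First-order constraints of rigid folding\<close>

lemma inner_derivative_eq_0_if_constant_on:
  fixes f g :: "real \<Rightarrow> 'a::real_inner"
  assumes "open S" "x \<in> S" "(f has_vector_derivative f') (at x)" "(g has_vector_derivative g') (at x)"
    and "\<And>s. s \<in> S \<Longrightarrow> f s \<bullet> g s = c"
  shows "f x \<bullet> g' + f' \<bullet> g x = 0"
proof -
  have "((\<lambda>s. f s \<bullet> g s) has_derivative (\<lambda>h. f x \<bullet> (h *\<^sub>R g') + (h *\<^sub>R f') \<bullet> g x)) (at x)"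
    using assms(3,4) unfolding has_vector_derivative_def by (rule has_derivative_inner)
  then have "((\<lambda>s. f s \<bullet> g s) has_field_derivative (f x \<bullet> g' + f' \<bullet> g x)) (at x)"
    unfolding has_field_derivative_def by (rule has_derivative_eq_rhs) (auto simp: algebra_simps)
  moreover have "((\<lambda>s. f s \<bullet> g s) has_field_derivative 0) (at x)"
    using has_field_derivative_transform_within_open[OF DERIV_const[of c] assms(1,2)] assms(5) by simp
  ultimately show ?thesis by (rule DERIV_unique)
qed

lemma rigid_vertex_first_order:
  fixes t :: "nat \<Rightarrow> real \<Rightarrow> real^3" and b :: "nat \<Rightarrow> real^3"
  assumes "open S" "\<theta> \<in> S"
    and D: "\<And>i. i \<in> {1..4} \<Longrightarrow> (t i has_vector_derivative b i) (at \<theta>)"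
    and lengths: "\<forall>i\<in>{1..4}. \<forall>s\<in>S. norm (t i s) = norm (t i 0)"
    and angles: "\<forall>s\<in>S. t 1 s \<bullet> t 2 s = t 1 0 \<bullet> t 2 0 \<and> t 2 s \<bullet> t 3 s = t 2 0 \<bullet> t 3 0
                       \<and> t 3 s \<bullet> t 4 s = t 3 0 \<bullet> t 4 0 \<and> t 4 s \<bullet> t 1 s = t 4 0 \<bullet> t 1 0"
  shows "t 1 \<theta> \<bullet> b 1 = 0" "t 2 \<theta> \<bullet> b 2 = 0" "t 3 \<theta> \<bullet> b 3 = 0" "t 4 \<theta> \<bullet> b 4 = 0"
    and "t 2 \<theta> \<bullet> b 1 + t 1 \<theta> \<bullet> b 2 = 0" "t 3 \<theta> \<bullet> b 2 + t 2 \<theta> \<bullet> b 3 = 0"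
    and "t 4 \<theta> \<bullet> b 3 + t 3 \<theta> \<bullet> b 4 = 0" "t 1 \<theta> \<bullet> b 4 + t 4 \<theta> \<bullet> b 1 = 0"
proof -
  note const = inner_derivative_eq_0_if_constant_on[OF assms(1,2) D D]
  have "t i \<theta> \<bullet> b i = 0" if i: "i \<in> {1..4}" for i
  proof -
    have "t i s \<bullet> t i s = norm (t i 0) ^ 2" if "s \<in> S" for s
      using lengths i that by (simp add: power2_norm_eq_inner[symmetric])
    from const[OF i i this] show ?thesis by (simp add: inner_commute)
  qed
  then show "t 1 \<theta> \<bullet> b 1 = 0" "t 2 \<theta> \<bullet> b 2 = 0" "t 3 \<theta> \<bullet> b 3 = 0" "t 4 \<theta> \<bullet> b 4 = 0" by simp_all
  show "t 2 \<theta> \<bullet> b 1 + t 1 \<theta> \<bullet> b 2 = 0" "t 3 \<theta> \<bullet> b 2 + t 2 \<theta> \<bullet> b 3 = 0"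
    "t 4 \<theta> \<bullet> b 3 + t 3 \<theta> \<bullet> b 4 = 0" "t 1 \<theta> \<bullet> b 4 + t 4 \<theta> \<bullet> b 1 = 0"
    using const[of 1 2 "t 1 0 \<bullet> t 2 0"] const[of 2 3 "t 2 0 \<bullet> t 3 0"] const[of 3 4 "t 3 0 \<bullet> t 4 0"]
      const[of 4 1 "t 4 0 \<bullet> t 1 0"] angles by (auto simp: inner_commute add.commute)
qed

theorem mainTheorem8:
  fixes t :: "nat \<Rightarrow> real \<Rightarrow> real^3"
    and th_minus th_plus \<theta> d\<theta>u d\<theta>v :: real
    and \<kappa> :: "real^4" and \<omega>u \<omega>v :: "real^3"
  defines "I \<equiv> {th_minus<..<th_plus}"
    and "t' \<equiv> (\<lambda>i s. vector_derivative (t i) (at s))"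
    and "u \<equiv> (\<lambda>s. t 1 s - t 3 s)"
    and "v \<equiv> (\<lambda>s. t 2 s - t 4 s)"
    and "u' \<equiv> (\<lambda>s. vector_derivative (\<lambda>r. t 1 r - t 3 r) (at s))"
    and "v' \<equiv> (\<lambda>s. vector_derivative (\<lambda>r. t 2 r - t 4 r) (at s))"
  assumes interval: "th_minus < 0" "0 < th_plus" "\<theta> \<in> I"
    and analytic: "\<forall>i\<in>{1..4}. real_analytic_on (t i) I"
    and lengths: "\<forall>i\<in>{1..4}. \<forall>s\<in>I. norm (t i s) = norm (t i 0)"
    and angles: "\<forall>s\<in>I. t 1 s \<bullet> t 2 s = t 1 0 \<bullet> t 2 0 \<and> t 2 s \<bullet> t 3 s = t 2 0 \<bullet> t 3 0
                       \<and> t 3 s \<bullet> t 4 s = t 3 0 \<bullet> t 4 0 \<and> t 4 s \<bullet> t 1 s = t 4 0 \<bullet> t 1 0"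
    and design_nondeg: "\<forall>(i,j,k)\<in>{(1,2,3),(2,3,4),(3,4,1),(4,1,2)}. Vtp t i j k 0 \<noteq> 0"
    and signs: "\<forall>(i,j,k)\<in>{(1,2,3),(2,3,4),(3,4,1),(4,1,2)}. \<forall>s\<in>I.
                  sgn (Vtp t i j k s) = sgn (Vtp t i j k 0)"
    and normalization: "\<forall>s\<in>I. u s \<bullet> e3 = 0 \<and> v s \<bullet> e3 = 0 \<and> e3 \<bullet> cross3 (u s) (v s) > 0"
    and uv_regular: "\<forall>s\<in>I. u' s \<bullet> u s \<noteq> 0 \<and> v' s \<bullet> v s \<noteq> 0"
    and V_nonzero: "\<forall>s\<in>I. \<forall>i\<in>{1..4}. \<forall>j\<in>{1..4}. \<forall>k\<in>{1..4}.
                      distinct [i, j, k] \<longrightarrow> Vtp t i j k s \<noteq> 0"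
  shows "((bigO2 (\<lambda>l. nbr \<omega>v d\<theta>v (tm1 t \<kappa>) l \<theta> - tp1 t \<kappa> l \<theta>)
          \<and> bigO2 (\<lambda>l. nbr \<omega>v d\<theta>v (tm3 t \<kappa>) l \<theta> - tp3 t \<kappa> l \<theta>)
          \<and> bigO2 (\<lambda>l. nbr \<omega>u d\<theta>u (tm2 t \<kappa>) l \<theta> - tp2 t \<kappa> l \<theta>)
          \<and> bigO2 (\<lambda>l. nbr \<omega>u d\<theta>u (tm4 t \<kappa>) l \<theta> - tp4 t \<kappa> l \<theta>))
         \<longleftrightarrow>
         ((cross3 \<omega>u (v \<theta>) + d\<theta>u *\<^sub>R v' \<theta> = cross3 \<omega>v (u \<theta>) + d\<theta>v *\<^sub>R u' \<theta>
           \<and> \<omega>u \<bullet> v' \<theta> = \<omega>v \<bullet> u' \<theta>)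
          \<and> (\<kappa>$1 = (cross3 (t 2 \<theta>) (t 3 \<theta>) \<bullet> \<omega>u + (t 3 \<theta> \<bullet> t' 2 \<theta>) * d\<theta>u) / Vtp t 1 2 3 \<theta>
           \<and> \<kappa>$2 = (cross3 (t 3 \<theta>) (t 4 \<theta>) \<bullet> \<omega>v + (t' 3 \<theta> \<bullet> t 4 \<theta>) * d\<theta>v) / Vtp t 2 3 4 \<theta>
           \<and> \<kappa>$3 = (cross3 (t 4 \<theta>) (t 1 \<theta>) \<bullet> \<omega>u + (t 1 \<theta> \<bullet> t' 4 \<theta>) * d\<theta>u) / Vtp t 3 1 4 \<theta>
           \<and> \<kappa>$4 = (cross3 (t 1 \<theta>) (t 2 \<theta>) \<bullet> \<omega>v + (t' 1 \<theta> \<bullet> t 2 \<theta>) * d\<theta>v) / Vtp t 4 2 1 \<theta>)))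
    \<and> ((cross3 \<omega>u (v \<theta>) + d\<theta>u *\<^sub>R v' \<theta> = cross3 \<omega>v (u \<theta>) + d\<theta>v *\<^sub>R u' \<theta>
           \<and> \<omega>u \<bullet> v' \<theta> = \<omega>v \<bullet> u' \<theta>)
         \<longleftrightarrow>
         (\<exists>k \<tau> :: real.
            \<omega>u = \<tau> *\<^sub>R u \<theta> + (k * (u' \<theta> \<bullet> u \<theta>)) *\<^sub>R v \<theta>
                 + ((d\<theta>u * (v' \<theta> \<bullet> u \<theta>) - d\<theta>v * (u' \<theta> \<bullet> u \<theta>)) / (e3 \<bullet> cross3 (u \<theta>) (v \<theta>))) *\<^sub>R e3
          \<and> \<omega>v = (k * (v' \<theta> \<bullet> v \<theta>)) *\<^sub>R u \<theta> - \<tau> *\<^sub>R v \<theta>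
                 + ((d\<theta>u * (v' \<theta> \<bullet> v \<theta>) - d\<theta>v * (u' \<theta> \<bullet> v \<theta>)) / (e3 \<bullet> cross3 (u \<theta>) (v \<theta>))) *\<^sub>R e3))"
proof -
  have \<theta>: "open I" "\<theta> \<in> I" using interval(3) unfolding I_def by auto
  have approx: "quadratic_approx (t i) (t' i \<theta>) \<theta>" if "i \<in> {1..4}" for i
    using real_analytic_on_quadratic_approx analytic that \<theta>(2) unfolding t'_def by blast
  note D = approx[THEN quadratic_approx_imp_has_vector_derivative]
  have A: "quadratic_approx (t 1) (t' 1 \<theta>) \<theta>" "quadratic_approx (t 2) (t' 2 \<theta>) \<theta>"
    "quadratic_approx (t 3) (t' 3 \<theta>) \<theta>" "quadratic_approx (t 4) (t' 4 \<theta>) \<theta>"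
    by (simp_all add: approx)
  have uv': "u' \<theta> = t' 1 \<theta> - t' 3 \<theta>" "v' \<theta> = t' 2 \<theta> - t' 4 \<theta>"
    unfolding u'_def v'_def by (auto intro!: vector_derivative_at has_vector_derivative_diff D)
  note jet = rigid_vertex_first_order[OF \<theta> D lengths angles]
  have regular: "u' \<theta> \<bullet> u \<theta> \<noteq> 0" using uv_regular \<theta>(2) by auto
  interpret rigid_vertex_jet "t 1 \<theta>" "t 2 \<theta>" "t 3 \<theta>" "t 4 \<theta>" "t' 1 \<theta>" "t' 2 \<theta>" "t' 3 \<theta>" "t' 4 \<theta>"
    using jet V_nonzero \<theta>(2) regular unfolding uv' u_def Vtp_def by unfold_locales (auto simp: inner_commute)
  have "u' \<theta> \<bullet> e3 = 0" "v' \<theta> \<bullet> e3 = 0"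
    using inner_derivative_eq_0_if_constant_on[OF \<theta> has_vector_derivative_diff[OF D D] has_vector_derivative_const, of _ _ e3 0]
      normalization uv' unfolding u_def v_def by auto
  moreover have "u \<theta> \<bullet> v' \<theta> + u' \<theta> \<bullet> v \<theta> = 0"
    using jet unfolding uv' u_def v_def by (simp add: inner_diff_left inner_diff_right inner_commute algebra_simps)
  ultimately have planar: "e3 \<bullet> u \<theta> = 0" "e3 \<bullet> v \<theta> = 0" "e3 \<bullet> u' \<theta> = 0" "e3 \<bullet> v' \<theta> = 0"
    "e3 \<bullet> cross3 (u \<theta>) (v \<theta>) \<noteq> 0" "u \<theta> \<bullet> v' \<theta> + u' \<theta> \<bullet> v \<theta> = 0"
    using normalization \<theta>(2) by (auto simp: inner_commute)
  show ?thesis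
    apply (rule conjI)
    subgoal
      unfolding tm1_def[abs_def] tm2_def[abs_def] tm3_def[abs_def] tm4_def[abs_def] tp1_def tp2_def tp3_def tp4_def
        bigO2_bent_tangent_mismatch_iff[OF A(1,4,1)] bigO2_bent_tangent_mismatch_iff[OF A(3,3,4)]
        bigO2_bent_tangent_mismatch_iff[OF A(2,2,3)] bigO2_bent_tangent_mismatch_iff[OF A(4,3,4)]
      unfolding u_def v_def uv' Vtp_def by (rule bending_coefficients_eq_0_iff)
    subgoal
      using planar regular by (intro planar_compatibility_iff)
    done
qed

end
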